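(* Let $n\ge 1$ be an integer and let $P\in\mathbb Z_{\ge0}[X]$ be a polynomial of degree $n$ with non-negative integer coefficients and $P(0)>0$. Define $h(j)=P(j)$ for $j\ge0$ and $h(j)=0$ for $j<0$. Then $\operatorname{hdepth}(h)\le 2^{n+1}$.
   Context: For a nonzero function $h:\mathbb Z\to\mathbb Z_{\ge 0}$ with $h(j)=0$ for all sufficiently negative $j$, and integers $k\le d$, set $\beta_k^d(h)=\sum_{j\le k}(-1)^{k-j}\binom{d-j}{k-j}h(j)$, and $\operatorname{hdepth}(h)=\max\{d\in\mathbb Z:\ \beta_k^d(h)\ge 0\text{ for all integers }k\le d\}$. *)

theory Defs
  imports "HOL-Computational_Algebra.Polynomial"
begin

text \<open>The sum is taken over the (finite, for h vanishing far to the left) set of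
  j \<le> k with h j \<noteq> 0; terms with h j = 0 contribute nothing.
  Only meaningful for k \<le> d (then d-j \<ge> k-j \<ge> 0).\<close>
definition hbeta :: "(int \<Rightarrow> int) \<Rightarrow> int \<Rightarrow> int \<Rightarrow> int" where
  "hbeta h k d = (\<Sum>j\<in>{j. j \<le> k \<and> h j \<noteq> 0}.
      (-1) ^ nat (k - j) * int (nat (d - j) choose nat (k - j)) * h j)"

definition hdepth :: "(int \<Rightarrow> int) \<Rightarrow> int" where
  "hdepth h = (GREATEST d. \<forall>k. k \<le> d \<longrightarrow> hbeta h k d \<ge> 0)"

end

theory Submission
  imports Defs
begin

text \<open>For \<open>d \<ge> 2\<close> they read
  \<open>\<beta>\<^sub>1 = h 1 - d h 0\<close> and \<open>2\<beta>\<^sub>2 = d(d-1) h 0 - 2(d-1) h 1 + 2 h 2\<close>; non-negativity of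
  both forces \<open>(d - 1) h 1 \<le> 2 h 2\<close>. For \<open>h = P\<close> with non-negative coefficients and
  \<open>P 0 > 0\<close>, comparing coefficients gives \<open>P 2 < 2\<^sup>n P 1\<close>, so \<open>d - 1 < 2\<^sup>n\<^sup>+\<^sup>1\<close>.\<close>

lemma Greatest_le_int:
  fixes a B :: int
  assumes "Q a" and "\<And>x. Q x \<Longrightarrow> x \<le> B"
  shows "(GREATEST x. Q x) \<le> B"
proof -
  let ?S = "{x. Q x \<and> a \<le> x}"
  have fin: "finite ?S"
    by (rule finite_subset[of _ "{a..B}"]) (use assms(2) in auto)
  have "Max ?S \<in> ?S"
    by (rule Max_in) (use fin assms(1) in auto)
  then have M: "Q (Max ?S)" "a \<le> Max ?S" by auto
  have "(GREATEST x. Q x) = Max ?S"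
  proof (rule Greatest_equality)
    fix y assume "Q y"
    show "y \<le> Max ?S"
    proof (cases "a \<le> y")
      case True
      then show ?thesis using \<open>Q y\<close> fin by (intro Max_ge) auto
    qed (use M in auto)
  qed (fact M(1))
  then show ?thesis using M assms(2) by simp
qed

lemma hbeta_eq_sum_atLeastAtMost:
  assumes "\<forall>j<0. h j = 0" and "k \<ge> 0"
  shows "hbeta h k d =
    (\<Sum>j\<in>{0..k}. (-1) ^ nat (k - j) * int (nat (d - j) choose nat (k - j)) * h j)"
  unfolding hbeta_def
  by (rule sum.mono_neutral_left) (use assms in \<open>auto simp: not_less\<close>)

lemma hbeta_neg:
  assumes "\<forall>j<0. h j = 0" and "k < 0"
  shows "hbeta h k d = 0"
  unfolding hbeta_def using assms by (auto intro!: sum.neutral)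

lemma hdepth_le:
  assumes "\<forall>j<0. h j = 0"
    and "\<And>d. \<forall>k\<le>d. hbeta h k d \<ge> 0 \<Longrightarrow> d \<le> B"
  shows "hdepth h \<le> B"
  unfolding hdepth_def
proof (rule Greatest_le_int[of _ "-1"])
  show "\<forall>k\<le>-1. hbeta h k (-1) \<ge> 0"
    using hbeta_neg[OF assms(1)] by simp
qed (use assms(2) in blast)

lemma hbeta_one:
  assumes "\<forall>j<0. h j = 0" and "d \<ge> 1"
  shows "hbeta h 1 d = h 1 - d * h 0"
proof -
  have "{0..1::int} = {0, 1}" by auto
  then show ?thesis using assms by (simp add: hbeta_eq_sum_atLeastAtMost)
qed

lemma hbeta_two:
  assumes "\<forall>j<0. h j = 0" and "d \<ge> 2"
  shows "2 * hbeta h 2 d = d * (d - 1) * h 0 - 2 * (d - 1) * h 1 + 2 * h 2"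
proof -
  have "{0..2::int} = {0, 1, 2}" by auto
  moreover have "int (nat (d - 1) choose 1) = d - 1" using assms(2) by simp
  ultimately have "hbeta h 2 d = int (nat d choose 2) * h 0 - (d - 1) * h 1 + h 2"
    using assms by (simp add: hbeta_eq_sum_atLeastAtMost nat_diff_distrib algebra_simps)
  then have "2 * hbeta h 2 d =
      (2 * int (nat d choose 2)) * h 0 - 2 * (d - 1) * h 1 + 2 * h 2"
    by (simp add: algebra_simps)
  moreover have "2 * int (nat d choose 2) = d * (d - 1)"
  proof -
    have "2 * int (nat d choose 2) = int (2 * (nat d choose 2))" by simp
    also have "\<dots> = int (nat d * (nat d - 1))"
      by (simp only: times_binomial_minus1_eq) simp
    also have "\<dots> = d * (d - 1)" using assms(2) by (simp add: of_nat_diff)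
    finally show ?thesis .
  qed
  ultimately show ?thesis by simp
qed

lemma hbeta_one_two_nonneg_bounds:
  assumes "\<forall>j<0. h j = 0" and "d \<ge> 2"
    and "hbeta h 1 d \<ge> 0" and "hbeta h 2 d \<ge> 0"
  shows "d * h 0 \<le> h 1" and "(d - 1) * h 1 \<le> 2 * h 2"
proof -
  show h1: "d * h 0 \<le> h 1"
    using assms hbeta_one[OF assms(1)] by simp
  have "(d - 1) * (d * h 0) \<le> (d - 1) * h 1"
    using h1 assms(2) by (intro mult_left_mono) auto
  then show "(d - 1) * h 1 \<le> 2 * h 2"
    using assms(4) hbeta_two[OF assms(1,2)] by (simp add: algebra_simps)
qed

lemma hdepth_le_of_ratio_bound:
  assumes "\<forall>j<0. h j = 0" and "h 0 > 0" and "c \<ge> 1" and "h 2 < c * h 1"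
  shows "hdepth h \<le> 2 * c"
proof (rule hdepth_le[OF assms(1)])
  fix d assume nonneg: "\<forall>k\<le>d. hbeta h k d \<ge> 0"
  show "d \<le> 2 * c"
  proof (cases "d \<ge> 2")
    case True
    have "hbeta h 1 d \<ge> 0" "hbeta h 2 d \<ge> 0" using nonneg True by auto
    note bounds = hbeta_one_two_nonneg_bounds[OF assms(1) True this]
    have "0 < d * h 0" using True assms(2) by simp
    with bounds(1) have "h 1 > 0" by linarith
    moreover have "(d - 1) * h 1 < (2 * c) * h 1"
      using bounds(2) assms(4) by simp
    ultimately show ?thesis by simp
  qed (use assms(3) in simp)
qed

lemma poly_two_less_power_degree_mult_poly_one:
  fixes P :: "int poly"
  assumes "degree P \<ge> 1" and "\<forall>i. coeff P i \<ge> 0" and "poly P 0 > 0"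
  shows "poly P 2 < 2 ^ degree P * poly P 1"
proof -
  let ?n = "degree P" and ?t = "\<lambda>i. coeff P i * (2 ^ degree P - 2 ^ i)"
  have "2 ^ ?n * poly P 1 - poly P 2 = (\<Sum>i\<le>?n. ?t i)"
    by (simp add: poly_altdef sum_distrib_left sum_distrib_right sum_subtractf algebra_simps)
  also have "\<dots> = ?t 0 + (\<Sum>i\<in>{..?n}-{0}. ?t i)"
    by (subst sum.remove[of _ 0]) auto
  also have "\<dots> \<ge> ?t 0"
    by (intro add_increasing2 sum_nonneg mult_nonneg_nonneg)
      (use assms(2) in \<open>auto simp: power_increasing\<close>)
  moreover have "?t 0 > 0"
  proof -
    have "coeff P 0 > 0" using assms(3) by (simp add: poly_0_coeff_0)
    moreover have "(2::int) ^ ?n > 2 ^ 0"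
      using assms(1) by (intro power_strict_increasing) auto
    ultimately show ?thesis by simp
  qed
  ultimately show ?thesis by linarith
qed

theorem theorem3p1:
  fixes P :: "int poly" and n :: nat and h :: "int \<Rightarrow> int"
  assumes "n \<ge> 1"
    and "degree P = n"
    and "\<forall>i. coeff P i \<ge> 0"
    and "poly P 0 > 0"
    and "\<forall>j. h j = (if j \<ge> 0 then poly P j else 0)"
  shows "hdepth h \<le> 2 ^ (n + 1)"
proof -
  have "poly P 2 < 2 ^ n * poly P 1"
    using poly_two_less_power_degree_mult_poly_one assms(1-4) by blast
  then have "hdepth h \<le> 2 * 2 ^ n"
    using assms(4,5) by (intro hdepth_le_of_ratio_bound) auto
  then show ?thesis by simp
qed

end
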